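(* Let $G$ be a graph with $n$ vertices and $\chi(G)>3$. Then $W(G)\le\min\{3\,\alpha(G),\ n-\alpha(G)\}+1$.
   Context: $\chi(G)$ is the chromatic number and $\alpha(G)$ the independence number (maximum size of a set of pairwise non-adjacent vertices) of $G$; $K_3$ is the complete graph on 3 vertices. Graphs are viewed as structures with an adjacency relation $E$ and equality. For a graph $G$ with $\chi(G)>3$, $W(G)$ is the least $k$ such that some existential-positive first-order sentence (built from atomic formulas $x=y$, $E(x,y)$ using only $\wedge$, $\vee$ and $\exists$) in which at most $k$ distinct variables occur is true in $G$ and false in $K_3$. Equivalently, $W(G)$ is the least $k$ such that for some $r$ Spoiler has a winning strategy in the $r$-round $k$-width 3-coloring game on $G$: in each round Spoiler may erase the colors of some colored vertices and then selects a vertex, which Duplicator colors red, blue or green; at most $k$ vertices may be colored after each round; Duplicator wins if after every round the partial coloring is proper (no two adjacent colored vertices have the same color). *)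

theory Defs
  imports Main
begin

text \<open>A finite simple graph is given by a finite vertex set V and a symmetric,
irreflexive adjacency relation E (only its restriction to V matters).\<close>

definition simple_graph :: "'a set \<Rightarrow> ('a \<Rightarrow> 'a \<Rightarrow> bool) \<Rightarrow> bool" where
  "simple_graph V E \<longleftrightarrow> finite V \<and> (\<forall>u\<in>V. \<forall>w\<in>V. E u w \<longrightarrow> E w u) \<and> (\<forall>u\<in>V. \<not> E u u)"

definition chromatic_number :: "'a set \<Rightarrow> ('a \<Rightarrow> 'a \<Rightarrow> bool) \<Rightarrow> nat" where
  "chromatic_number V E = (LEAST k. \<exists>f :: 'a \<Rightarrow> nat.
      (\<forall>v\<in>V. f v < k) \<and> (\<forall>u\<in>V. \<forall>w\<in>V. E u w \<longrightarrow> f u \<noteq> f w))"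

definition independence_number :: "'a set \<Rightarrow> ('a \<Rightarrow> 'a \<Rightarrow> bool) \<Rightarrow> nat" where
  "independence_number V E = Max {card S | S. S \<subseteq> V \<and> (\<forall>u\<in>S. \<forall>w\<in>S. \<not> E u w)}"

datatype color = Red | Blue | Green

definition proper_partial :: "('a \<Rightarrow> 'a \<Rightarrow> bool) \<Rightarrow> ('a \<rightharpoonup> color) \<Rightarrow> bool" where
  "proper_partial E p \<longleftrightarrow> (\<forall>u w a b. p u = Some a \<and> p w = Some b \<and> E u w \<longrightarrow> a \<noteq> b)"

text \<open>spoiler_wins V E k r p: from position p (current partial colouring), Spoiler has a
strategy in the k-width 3-colouring game guaranteeing that within at most r further rounds the
partial colouring becomes improper. In a round Spoiler erases the colours of a set S of coloured
vertices, then selects a vertex v of G, which Duplicator colours with some colour c; at most k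
vertices may be coloured afterwards.\<close>
fun spoiler_wins :: "'a set \<Rightarrow> ('a \<Rightarrow> 'a \<Rightarrow> bool) \<Rightarrow> nat \<Rightarrow> nat \<Rightarrow> ('a \<rightharpoonup> color) \<Rightarrow> bool" where
  "spoiler_wins V E k 0 p = False"
| "spoiler_wins V E k (Suc r) p =
     (\<exists>S v. S \<subseteq> dom p \<and> v \<in> V \<and> card ((dom p - S) \<union> {v}) \<le> k \<and>
        (\<forall>c. \<not> proper_partial E ((p |` (dom p - S))(v \<mapsto> c))
             \<or> spoiler_wins V E k r ((p |` (dom p - S))(v \<mapsto> c))))"

definition W :: "'a set \<Rightarrow> ('a \<Rightarrow> 'a \<Rightarrow> bool) \<Rightarrow> nat" where
  "W V E = (LEAST k. \<exists>r. spoiler_wins V E k r Map.empty)"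

end

(* Spoiler has two strategies. For width n - \<alpha> + 1, fix a maximum independent set I and let
   Spoiler select the n - \<alpha> vertices outside I. Some vertex of I then admits no colour compatible
   with Duplicator's answers: otherwise these admissible colours, together with the colouring of
   V - I, would form a proper 3-colouring of G, as I is independent. For width 3\<alpha> + 1, Spoiler
   selects any 3\<alpha> + 1 vertices: the three colour classes are independent, so they cover at most
   3\<alpha> of them. *)

theory Submission
  imports Defs
begin

lemma spoiler_wins_SucI:
  assumes "v \<in> V" "card (insert v (dom p)) \<le> k"
    and "\<And>c. proper_partial E (p(v \<mapsto> c)) \<Longrightarrow> spoiler_wins V E k r (p(v \<mapsto> c))"
  shows "spoiler_wins V E k (Suc r) p"
proof -
  have "p |` dom p = p"
    by (simp add: restrict_map_def fun_eq_iff domIff)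
  then show ?thesis
    using assms by (auto intro!: exI[of _ "{}"] exI[of _ v])
qed

lemma spoiler_wins_colour_set:
  assumes "finite X" "X \<subseteq> V" "X \<inter> dom p = {}" "finite (dom p)"
    and "card (dom p) + card X \<le> k" "proper_partial E p"
    and "\<And>q. dom q = dom p \<union> X \<Longrightarrow> p \<subseteq>\<^sub>m q \<Longrightarrow> proper_partial E q \<Longrightarrow> spoiler_wins V E k r q"
  shows "spoiler_wins V E k (card X + r) p"
  using assms
proof (induction X arbitrary: p rule: finite_induct)
  case empty
  then show ?case by (simp add: map_le_refl)
next
  case (insert x X)
  have x_fresh: "x \<notin> dom p"
    using insert.prems(2) by blast
  have card_insert: "card (insert x X) + r = Suc (card X + r)"
    using insert.hyps by simp
  show ?case
    unfolding card_insert
  proof (rule spoiler_wins_SucI)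
    show "x \<in> V" using insert.prems by simp
    show "card (insert x (dom p)) \<le> k" using insert by (simp add: card_insert_if)
  next
    fix c
    assume "proper_partial E (p(x \<mapsto> c))"
    then show "spoiler_wins V E k (card X + r) (p(x \<mapsto> c))"
    proof (rule insert.IH[rotated 4])
      fix q
      assume q: "dom q = dom (p(x \<mapsto> c)) \<union> X" "p(x \<mapsto> c) \<subseteq>\<^sub>m q" "proper_partial E q"
      have "p \<subseteq>\<^sub>m p(x \<mapsto> c)"
        using insert.prems by (auto simp: map_le_def)
      then have "p \<subseteq>\<^sub>m q"
        using q(2) by (rule map_le_trans)
      moreover have "dom q = dom p \<union> insert x X"
        using q(1) by simp
      ultimately show "spoiler_wins V E k r q"
        using insert.prems(6) q(3) by blast
    next
      show "X \<subseteq> V" "X \<inter> dom (p(x \<mapsto> c)) = {}" "finite (dom (p(x \<mapsto> c)))"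
        using insert by auto
      show "card (dom (p(x \<mapsto> c))) + card X \<le> k"
        using insert x_fresh by simp
    qed
  qed
qed

lemma W_le: "spoiler_wins V E k r Map.empty \<Longrightarrow> W V E \<le> k"
  unfolding W_def by (rule Least_le) blast

lemma proper_partial_empty: "proper_partial E Map.empty"
  by (simp add: proper_partial_def)

lemma chromatic_number_le_3:
  assumes "proper_partial E p" "V \<subseteq> dom p"
  shows "chromatic_number V E \<le> 3"
proof -
  define code :: "color \<Rightarrow> nat" where "code c = (case c of Red \<Rightarrow> 0 | Blue \<Rightarrow> 1 | Green \<Rightarrow> 2)" for c
  have "code a = code b \<longleftrightarrow> a = b" for a b
    by (cases a; cases b) (simp_all add: code_def)
  moreover have "code c < 3" for c
    by (cases c) (simp_all add: code_def)
  moreover have "p v = Some (the (p v))" if "v \<in> V" for v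
    using assms(2) that by auto
  ultimately have "\<forall>u\<in>V. \<forall>w\<in>V. E u w \<longrightarrow> code (the (p u)) \<noteq> code (the (p w))"
    "\<forall>v\<in>V. code (the (p v)) < 3"
    using assms(1) unfolding proper_partial_def by metis+
  then show ?thesis
    unfolding chromatic_number_def by (intro Least_le exI[of _ "\<lambda>v. code (the (p v))"]) blast
qed

lemma proper_partial_extend_independent:
  assumes "proper_partial E q" "dom q \<inter> I = {}" "\<forall>u\<in>I. \<forall>w\<in>I. \<not> E u w"
    and "\<forall>v\<in>I. proper_partial E (q(v \<mapsto> f v))"
  shows "proper_partial E (\<lambda>v. if v \<in> I then Some (f v) else q v)"
  unfolding proper_partial_def
proof (intro allI impI)
  fix u w a b
  assume uw: "(if u \<in> I then Some (f u) else q u) = Some a \<and>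
    (if w \<in> I then Some (f w) else q w) = Some b \<and> E u w"
  show "a \<noteq> b"
  proof (cases "u \<in> I"; cases "w \<in> I")
    assume "u \<in> I" "w \<notin> I"
    then show ?thesis
      using uw assms(4) unfolding proper_partial_def by (metis fun_upd_other fun_upd_same)
  next
    assume "u \<notin> I" "w \<in> I"
    then show ?thesis
      using uw assms(4) unfolding proper_partial_def by (metis fun_upd_other fun_upd_same)
  qed (use uw assms(1,3) in \<open>auto simp: proper_partial_def\<close>)
qed

lemma
  assumes "finite V"
  shows card_le_independence_number:
      "\<lbrakk>S \<subseteq> V; \<forall>u\<in>S. \<forall>w\<in>S. \<not> E u w\<rbrakk> \<Longrightarrow> card S \<le> independence_number V E"
    and independence_number_attained:
      "\<exists>I\<subseteq>V. (\<forall>u\<in>I. \<forall>w\<in>I. \<not> E u w) \<and> card I = independence_number V E"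
proof -
  define C where "C = {card S | S. S \<subseteq> V \<and> (\<forall>u\<in>S. \<forall>w\<in>S. \<not> E u w)}"
  have \<alpha>: "independence_number V E = Max C"
    by (simp add: independence_number_def C_def)
  have "C \<subseteq> {..card V}"
    using assms unfolding C_def by (auto intro: card_mono)
  then have finite_C: "finite C"
    by (rule finite_subset) simp
  show "\<lbrakk>S \<subseteq> V; \<forall>u\<in>S. \<forall>w\<in>S. \<not> E u w\<rbrakk> \<Longrightarrow> card S \<le> independence_number V E"
    unfolding \<alpha> using finite_C by (auto simp: C_def intro: Max_ge)
  have "card {} \<in> C"
    unfolding C_def by (auto intro!: exI[of _ "{}"])
  then have "Max C \<in> C"
    using finite_C by (intro Max_in) auto
  moreover have "\<forall>m\<in>C. \<exists>I\<subseteq>V. (\<forall>u\<in>I. \<forall>w\<in>I. \<not> E u w) \<and> card I = m"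
    unfolding C_def by blast
  ultimately show "\<exists>I\<subseteq>V. (\<forall>u\<in>I. \<forall>w\<in>I. \<not> E u w) \<and> card I = independence_number V E"
    unfolding \<alpha> by blast
qed

lemma card_dom_proper_partial_le:
  assumes "finite V" "dom q \<subseteq> V" "proper_partial E q"
  shows "card (dom q) \<le> 3 * independence_number V E"
proof -
  let ?class = "\<lambda>c. {v. q v = Some c}"
  have "c \<in> {Red, Blue, Green}" for c
    by (cases c) simp_all
  then have "dom q = (\<Union>c\<in>{Red, Blue, Green}. ?class c)"
    by blast
  then have "card (dom q) \<le> (\<Sum>c\<in>{Red, Blue, Green}. card (?class c))"
    using card_UN_le by (metis finite.emptyI finite.insertI)
  also have "\<dots> \<le> 3 * independence_number V E"
  proof -
    have "?class c \<subseteq> V" for c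
      using assms(2) by auto
    moreover have "\<forall>u\<in>?class c. \<forall>w\<in>?class c. \<not> E u w" for c
      using assms(3) unfolding proper_partial_def by blast
    ultimately have "card (?class c) \<le> independence_number V E" for c
      by (rule card_le_independence_number[OF assms(1)])
    then show ?thesis
      using sum_bounded_above[where A = "{Red, Blue, Green}" and f = "\<lambda>c. card (?class c)"
        and K = "independence_number V E"] by simp
  qed
  finally show ?thesis .
qed

lemma spoiler_wins_outside_independent_set:
  assumes "finite V" "I \<subseteq> V" "\<forall>u\<in>I. \<forall>w\<in>I. \<not> E u w" "chromatic_number V E > 3"
  shows "spoiler_wins V E (card (V - I) + 1) (card (V - I) + 1) Map.empty"
proof (rule spoiler_wins_colour_set)
  fix q
  assume q: "dom q = dom Map.empty \<union> (V - I)" "proper_partial E q"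
  have "\<exists>v\<in>I. \<forall>c. \<not> proper_partial E (q(v \<mapsto> c))"
  proof (rule ccontr)
    assume "\<not> ?thesis"
    then obtain f where "\<forall>v\<in>I. proper_partial E (q(v \<mapsto> f v))"
      by metis
    then have "proper_partial E (\<lambda>v. if v \<in> I then Some (f v) else q v)"
      using q assms(3) by (intro proper_partial_extend_independent) auto
    moreover have "V \<subseteq> dom (\<lambda>v. if v \<in> I then Some (f v) else q v)"
      using q(1) by (auto simp: dom_def)
    ultimately have "chromatic_number V E \<le> 3"
      by (rule chromatic_number_le_3)
    then show False
      using assms(4) by simp
  qed
  then obtain v where "v \<in> I" "\<And>c. \<not> proper_partial E (q(v \<mapsto> c))"
    by blast
  moreover have "card (insert v (dom q)) \<le> card (V - I) + 1"
    using q(1) assms(1) by (simp add: card_insert_if)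
  ultimately show "spoiler_wins V E (card (V - I) + 1) 1 q"
    unfolding One_nat_def using assms(2) by (blast intro: spoiler_wins_SucI)
qed (use assms in \<open>simp_all add: proper_partial_empty\<close>)

lemma spoiler_wins_beyond_three_independent:
  assumes "finite V" "T \<subseteq> V" "card T > 3 * independence_number V E"
  shows "spoiler_wins V E (card T) (card T) Map.empty"
proof -
  have "spoiler_wins V E (card T) (card T + 0) Map.empty"
  proof (rule spoiler_wins_colour_set)
    fix q
    assume "dom q = dom Map.empty \<union> T" "proper_partial E q"
    then have "card T \<le> 3 * independence_number V E"
      using card_dom_proper_partial_le assms(1,2) by fastforce
    then show "spoiler_wins V E (card T) 0 q"
      using assms(3) by simp
  qed (use assms finite_subset in \<open>simp_all add: proper_partial_empty\<close>)
  then show ?thesis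
    by simp
qed

theorem theorem2:
  fixes V :: "'a set" and E :: "'a \<Rightarrow> 'a \<Rightarrow> bool"
  assumes "simple_graph V E"
    and "chromatic_number V E > 3"
  shows "W V E \<le> min (3 * independence_number V E) (card V - independence_number V E) + 1"
proof -
  let ?\<alpha> = "independence_number V E"
  have "finite V"
    using assms(1) by (simp add: simple_graph_def)
  then obtain I where I: "I \<subseteq> V" "\<forall>u\<in>I. \<forall>w\<in>I. \<not> E u w" "card I = ?\<alpha>"
    by (metis independence_number_attained)
  have "card (V - I) = card V - ?\<alpha>"
    using I(1,3) \<open>finite V\<close> finite_subset by (metis card_Diff_subset)
  then have complement_bound: "W V E \<le> card V - ?\<alpha> + 1"
    using W_le[OF spoiler_wins_outside_independent_set[OF \<open>finite V\<close> I(1,2) assms(2)]] by simp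
  show ?thesis
  proof (cases "3 * ?\<alpha> < card V")
    case True
    then obtain T where "T \<subseteq> V" "card T = 3 * ?\<alpha> + 1"
      using obtain_subset_with_card_n[of "3 * ?\<alpha> + 1" V] by auto
    then have "W V E \<le> 3 * ?\<alpha> + 1"
      using W_le[OF spoiler_wins_beyond_three_independent[OF \<open>finite V\<close>, of T]] by simp
    with complement_bound show ?thesis
      by simp
  next
    case False
    with complement_bound show ?thesis
      by simp
  qed
qed

end
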